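(* Let $F:(M_1(c_1,c_2,c_3),g_1)\to(M_2,g_2)$ be a Riemannian submersion from a generalized Sasakian space form with $\dim M_1=n=2k+1$ onto a Riemannian manifold with $\dim M_2=m$ and fibre dimension $r=\dim\mathcal V_p>2$. Let $p\in M_1$, $\Pi\subset\mathcal V_p$ a $2$-plane, $\{V_1,\dots,V_r\}$ an orthonormal basis of $\mathcal V_p$ with $\Pi=\mathrm{span}\{V_1,V_2\}$, and $\{h_1,\dots,h_s\}$ an orthonormal basis of $\mathcal H_p$. Then: (i) if $\xi_p\in\mathcal V_p$, $$\tau^{\ker F_*}_{\mathcal V}(p)-K^{\ker F_*}_{\mathcal V}(\Pi)\ge-\frac{r^2(r-2)}{2(r-1)}\|H\|^2+\frac{c_1}2(r^2-r-2)-c_3\big((r-1)-\Theta(\Pi)\big)+\frac32c_2\big(\|Q\|^2-2g_1(V_1,QV_2)^2\big);$$ (ii) if $\xi_p\in\mathcal H_p$, $$\tau^{\ker F_*}_{\mathcal V}(p)-K^{\ker F_*}_{\mathcal V}(\Pi)\ge-\frac{r^2(r-2)}{2(r-1)}\|H\|^2+\frac{c_1}2(r^2-r-2)+\frac32c_2\big(\|Q\|^2-2g_1(V_1,QV_2)^2\big),$$ where $\Theta(\Pi)=\eta(V_1)^2+\eta(V_2)^2$. In each case equality holds if and only if Condition (E) holds at $p$ for $\Pi$.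
   Context: An almost contact metric manifold $(M_1,\phi,\xi,\eta,g_1)$ is an odd-dimensional Riemannian manifold with a $(1,1)$-tensor $\phi$, vector field $\xi$, $1$-form $\eta$ such that $\eta(\xi)=1$, $\phi^2Z=-Z+\eta(Z)\xi$, $g_1(\phi Z_1,\phi Z_2)=g_1(Z_1,Z_2)-\eta(Z_1)\eta(Z_2)$. It is a generalized Sasakian space form $M_1(c_1,c_2,c_3)$ if there are smooth functions $c_1,c_2,c_3$ with $R(Z_1,Z_2)Z_3=c_1\{g_1(Z_2,Z_3)Z_1-g_1(Z_1,Z_3)Z_2\}+c_2\{g_1(Z_1,\phi Z_3)\phi Z_2-g_1(Z_2,\phi Z_3)\phi Z_1+2g_1(Z_1,\phi Z_2)\phi Z_3\}+c_3\{\eta(Z_1)\eta(Z_3)Z_2-\eta(Z_2)\eta(Z_3)Z_1+g_1(Z_1,Z_3)\eta(Z_2)\xi-g_1(Z_2,Z_3)\eta(Z_1)\xi\}$. For a tangent vector $Z$ write $\phi Z=PZ+QZ$ with $PZ\in\mathcal H$, $QZ\in\mathcal V$, and $\|Q\|^2=\sum_{i,j=1}^r g_1(QV_i,V_j)^2$. Let $(M_1,g_1)$, $(M_2,g_2)$ be Riemannian manifolds, $\dim M_1=n$, $\dim M_2=m$, and $F:M_1\to M_2$ a Riemannian submersion (a surjective smooth map whose differential $F_{*p}$ is surjective at every $p$ and preserves the length of horizontal vectors). Write $\mathcal V=\ker F_*$ (vertical distribution), $\mathcal H=(\ker F_* )^\perp$ (horizontal distribution), $r=\dim\mathcal V_p=n-m$,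 $s=\dim\mathcal H_p=m$; $v,h$ denote the orthogonal projections onto $\mathcal V,\mathcal H$, and $\nabla$ the Levi-Civita connection of $g_1$. O'Neill's tensor: $\mathcal T_EF=h\nabla_{vE}vF+v\nabla_{vE}hF$. Curvature convention: $R^{M_1}(X,Y,Z,W)=g_1(R^{M_1}(X,Y)Z,W)$, normalized so that $R^{M_1}(X,Y,Y,X)$ is the sectional curvature of the plane spanned by orthonormal $X,Y$. The curvature $R^{\ker F_*}$ of the fibres is related to $R^{M_1}$ (as used in the paper) by: for vertical $F_1,\dots,F_4$, $R^{M_1}(F_1,F_2,F_3,F_4)=R^{\ker F_*}(F_1,F_2,F_3,F_4)+g_1(\mathcal T_{F_1}F_4,\mathcal T_{F_2}F_3)-g_1(\mathcal T_{F_2}F_4,\mathcal T_{F_1}F_3)$. With the chosen orthonormal bases at $p$: $(\mathcal T^{\mathcal H})^\ell_{ij}=g_1(\mathcal T_{V_i}V_j,h_\ell)$; the mean curvature vector of the fibres is $H=\frac1r\sum_{i=1}^r\mathcal T_{V_i}V_i$; $\tau^{\ker F_*}_{\mathcal V}(p)=\frac12\sum_{i,j=1}^rR^{\ker F_*}(V_i,V_j,V_j,V_i)$, $K^{\ker F_*}_{\mathcal V}(\Pi)=R^{\ker F_*}(V_1,V_2,V_2,V_1)$ for $\Pi=\mathrm{span}\{V_1,V_2\}$. Condition (E) at $p$ for $\Pi$: there exist orthonormal bases $\{V_1,\dots,V_r\}$ of $\mathcal V_p$ with $\Pi=\mathrm{span}\{V_1,V_2\}$ and $\{h_1,\dots,h_s\}$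 of $\mathcal H_p$ with $h_1=H(p)/\|H(p)\|$ if $H(p)\neq0$ ($h_1$ arbitrary if $H(p)=0$), such that: $(\mathcal T^{\mathcal H})^\ell_{1j}=(\mathcal T^{\mathcal H})^\ell_{2j}=0$ for $j>2$, $\ell=1,\dots,s$; $(\mathcal T^{\mathcal H})^1_{ij}=0$ for $i\ne j$, $i,j>2$; $(\mathcal T^{\mathcal H})^\ell_{ij}=0$ for $i,j>2$, $\ell=2,\dots,s$; $(\mathcal T^{\mathcal H})^\ell_{11}+(\mathcal T^{\mathcal H})^\ell_{22}=0$ for $\ell=2,\dots,s$; and $(\mathcal T^{\mathcal H})^1_{11}+(\mathcal T^{\mathcal H})^1_{22}=(\mathcal T^{\mathcal H})^1_{33}=\cdots=(\mathcal T^{\mathcal H})^1_{rr}$. *)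

theory Defs
  imports "HOL-Analysis.Analysis"
begin

text \<open>Pointwise (tangent-space at p) model. The tangent space T_pM_1 is a finite
  dimensional real inner product space 'a, with g_1 at p given by inner.\<close>

definition orth_comp :: "'a::real_inner set \<Rightarrow> 'a set" where
  "orth_comp V = {x. \<forall>v\<in>V. inner x v = 0}"

definition vproj :: "'a::real_inner set \<Rightarrow> 'a \<Rightarrow> 'a" where
  "vproj V z = (THE v. v \<in> V \<and> z - v \<in> orth_comp V)"

definition onb :: "'a::real_inner set \<Rightarrow> nat \<Rightarrow> (nat \<Rightarrow> 'a) \<Rightarrow> bool" where
  "onb W k e \<longleftrightarrow> (\<forall>i\<in>{1..k}. e i \<in> W) \<and>
     (\<forall>i\<in>{1..k}. \<forall>j\<in>{1..k}. inner (e i) (e j) = (if i = j then 1 else 0)) \<and>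
     span (e ` {1..k}) = W"

definition almost_contact_metric ::
  "('a::real_inner \<Rightarrow> 'a) \<Rightarrow> 'a \<Rightarrow> ('a \<Rightarrow> real) \<Rightarrow> bool" where
  "almost_contact_metric \<phi> \<xi> \<eta> \<longleftrightarrow> linear \<phi> \<and> linear \<eta> \<and> \<eta> \<xi> = 1 \<and>
     (\<forall>Z. \<phi> (\<phi> Z) = - Z + \<eta> Z *\<^sub>R \<xi>) \<and>
     (\<forall>Z1 Z2. inner (\<phi> Z1) (\<phi> Z2) = inner Z1 Z2 - \<eta> Z1 * \<eta> Z2)"

definition gss_curv ::
  "real \<Rightarrow> real \<Rightarrow> real \<Rightarrow> ('a::real_inner \<Rightarrow> 'a) \<Rightarrow> 'a \<Rightarrow> ('a \<Rightarrow> real) \<Rightarrow> 'a \<Rightarrow> 'a \<Rightarrow> 'a \<Rightarrow> 'a" where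
  "gss_curv c1 c2 c3 \<phi> \<xi> \<eta> Z1 Z2 Z3 =
     c1 *\<^sub>R (inner Z2 Z3 *\<^sub>R Z1 - inner Z1 Z3 *\<^sub>R Z2)
   + c2 *\<^sub>R (inner Z1 (\<phi> Z3) *\<^sub>R \<phi> Z2 - inner Z2 (\<phi> Z3) *\<^sub>R \<phi> Z1
             + (2 * inner Z1 (\<phi> Z2)) *\<^sub>R \<phi> Z3)
   + c3 *\<^sub>R ((\<eta> Z1 * \<eta> Z3) *\<^sub>R Z2 - (\<eta> Z2 * \<eta> Z3) *\<^sub>R Z1
             + (inner Z1 Z3 * \<eta> Z2) *\<^sub>R \<xi> - (inner Z2 Z3 * \<eta> Z1) *\<^sub>R \<xi>)"

definition tauV :: "('a \<Rightarrow> 'a \<Rightarrow> 'a \<Rightarrow> 'a \<Rightarrow> real) \<Rightarrow> nat \<Rightarrow> (nat \<Rightarrow> 'a) \<Rightarrow> real" where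
  "tauV Rk r e = (1/2) * (\<Sum>i\<in>{1..r}. \<Sum>j\<in>{1..r}. Rk (e i) (e j) (e j) (e i))"

definition meanH :: "('a::real_vector \<Rightarrow> 'a \<Rightarrow> 'a) \<Rightarrow> nat \<Rightarrow> (nat \<Rightarrow> 'a) \<Rightarrow> 'a" where
  "meanH T r e = (1 / real r) *\<^sub>R (\<Sum>i\<in>{1..r}. T (e i) (e i))"

definition Qnorm2 :: "'a::real_inner set \<Rightarrow> ('a \<Rightarrow> 'a) \<Rightarrow> nat \<Rightarrow> (nat \<Rightarrow> 'a) \<Rightarrow> real" where
  "Qnorm2 V \<phi> r e = (\<Sum>i\<in>{1..r}. \<Sum>j\<in>{1..r}. (inner (vproj V (\<phi> (e i))) (e j))\<^sup>2)"

definition condE ::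
  "'a::real_inner set \<Rightarrow> ('a \<Rightarrow> 'a \<Rightarrow> 'a) \<Rightarrow> 'a \<Rightarrow> nat \<Rightarrow> nat \<Rightarrow> (nat \<Rightarrow> 'a) \<Rightarrow> bool" where
  "condE V T Hm r s e \<longleftrightarrow> (\<exists>W h. onb V r W \<and> span {W 1, W 2} = span {e 1, e 2} \<and>
     onb (orth_comp V) s h \<and> (Hm \<noteq> 0 \<longrightarrow> h 1 = (1 / norm Hm) *\<^sub>R Hm) \<and>
     (let t = (\<lambda>l i j. inner (T (W i) (W j)) (h l)) in
        (\<forall>l\<in>{1..s}. \<forall>j\<in>{3..r}. t l 1 j = 0 \<and> t l 2 j = 0) \<and>
        (1 \<le> s \<longrightarrow> (\<forall>i\<in>{3..r}. \<forall>j\<in>{3..r}. i \<noteq> j \<longrightarrow> t 1 i j = 0)) \<and>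
        (\<forall>l\<in>{2..s}. \<forall>i\<in>{3..r}. \<forall>j\<in>{3..r}. t l i j = 0) \<and>
        (\<forall>l\<in>{2..s}. t l 1 1 + t l 2 2 = 0) \<and>
        (1 \<le> s \<longrightarrow> (\<forall>i\<in>{3..r}. t 1 1 1 + t 1 2 2 = t 1 i i))))"

end

theory Submission
  imports Defs
begin

text \<open>
  By the Gauss equation, tau - K(Pi) for the fibres equals the corresponding combination of
  ambient sectional curvatures, which is explicit for a generalized Sasakian space form, minus
  r^2 (r - 2) / (2 (r - 1)) |H|^2, plus Chen's defect of the vectors B_ij = T_{V_i}V_j. The
  defect is a sum of squares: of the B_1j and B_2j with j > 2, of the B_ij with i <> j > 2, and
  of the deviations of the r - 1 vectors B_11 + B_22, B_33, ..., B_rr from their mean. Hence it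
  is nonnegative, and it vanishes exactly when the B_ij have the shape required by Condition (E).
  The defect is unchanged by orthonormal changes of the fibre basis preserving span{V_1, V_2},
  so it does not matter that (E) refers to some adapted basis rather than the given one.
\<close>

section \<open>Orthonormal bases and the vertical projection\<close>

lemma onb_in: "onb W k e \<Longrightarrow> i \<in> {1..k} \<Longrightarrow> e i \<in> W"
  by (auto simp: onb_def)

lemma onb_inner:
  "onb W k e \<Longrightarrow> i \<in> {1..k} \<Longrightarrow> j \<in> {1..k} \<Longrightarrow> inner (e i) (e j) = (if i = j then 1 else 0)"
  by (auto simp: onb_def)

lemma onb_subspace: "onb W k e \<Longrightarrow> subspace W"
  unfolding onb_def by (metis subspace_span)

lemma onb_eq_0:
  assumes "onb W k e" "x \<in> W" "\<And>i. i \<in> {1..k} \<Longrightarrow> inner x (e i) = 0"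
  shows "x = 0"
proof -
  have "span (e ` {1..k}) \<subseteq> {y. inner x y = 0}"
    by (rule span_minimal) (auto simp: assms(3) subspace_def inner_add_right)
  then show ?thesis
    using assms(1,2) by (auto simp: onb_def)
qed

lemma onb_expand:
  assumes o: "onb W k e" and x: "x \<in> W"
  shows "x = (\<Sum>i\<in>{1..k}. inner x (e i) *\<^sub>R e i)"
proof -
  let ?y = "x - (\<Sum>i\<in>{1..k}. inner x (e i) *\<^sub>R e i)"
  have "?y \<in> W"
    using onb_subspace[OF o] onb_in[OF o] x
    by (auto intro!: subspace_diff subspace_sum subspace_scale)
  moreover have "inner ?y (e j) = 0" if j: "j \<in> {1..k}" for j
  proof -
    have "(\<Sum>i\<in>{1..k}. inner x (e i) * inner (e i) (e j)) = (\<Sum>i\<in>{1..k}. if i = j then inner x (e j) else 0)"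
      using onb_inner[OF o _ j] by (intro sum.cong) auto
    then show ?thesis
      using j by (simp add: inner_diff_left inner_sum_left)
  qed
  ultimately have "?y = 0"
    by (rule onb_eq_0[OF o])
  then show ?thesis
    by simp
qed

lemma onb_parseval:
  assumes "onb W k e" "x \<in> W"
  shows "inner x y = (\<Sum>i\<in>{1..k}. inner x (e i) * inner (e i) y)"
  by (subst onb_expand[OF assms]) (simp add: inner_sum_left)

lemma orthonormal_family_inj_on:
  assumes "\<And>i j. i \<in> {1..k} \<Longrightarrow> j \<in> {1..k} \<Longrightarrow> inner (e i) (e j) = (if i = j then 1 else 0)"
  shows "inj_on e {1..k}"
  by (rule inj_onI) (metis assms zero_neq_one)

lemma orthonormal_family_independent:
  assumes "\<And>i j. i \<in> {1..k} \<Longrightarrow> j \<in> {1..k} \<Longrightarrow> inner (e i) (e j) = (if i = j then 1 else 0)"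
  shows "independent (e ` {1..k})"
proof (rule pairwise_orthogonal_independent)
  show "pairwise orthogonal (e ` {1..k})"
    using assms by (auto simp: pairwise_def orthogonal_def)
  show "0 \<notin> e ` {1..k}"
    using assms by force
qed

lemma onb_dim:
  fixes e :: "nat \<Rightarrow> 'a::euclidean_space"
  assumes "onb W k e"
  shows "dim W = k"
proof -
  have orth: "\<And>i j. i \<in> {1..k} \<Longrightarrow> j \<in> {1..k} \<Longrightarrow> inner (e i) (e j) = (if i = j then 1 else 0)"
    using assms by (rule onb_inner)
  have "dim W = dim (span (e ` {1..k}))"
    using assms by (simp add: onb_def)
  also have "\<dots> = card (e ` {1..k})"
    by (rule dim_span_eq_card_independent[OF orthonormal_family_independent[OF orth]])
  also have "\<dots> = k"
    using card_image[OF orthonormal_family_inj_on[OF orth]] by simp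
  finally show ?thesis .
qed

lemma onbI:
  fixes e :: "nat \<Rightarrow> 'a::euclidean_space"
  assumes W: "subspace W" "dim W = k" and in_W: "\<And>i. i \<in> {1..k} \<Longrightarrow> e i \<in> W"
    and orth: "\<And>i j. i \<in> {1..k} \<Longrightarrow> j \<in> {1..k} \<Longrightarrow> inner (e i) (e j) = (if i = j then 1 else 0)"
  shows "onb W k e"
proof -
  have "span (e ` {1..k}) \<subseteq> W"
    using in_W W(1) by (intro span_minimal) auto
  moreover have "W \<subseteq> span (e ` {1..k})"
    using in_W W(2) card_image[OF orthonormal_family_inj_on[OF orth]]
    by (intro card_ge_dim_independent orthonormal_family_independent[OF orth]) auto
  ultimately show ?thesis
    using in_W orth by (auto simp: onb_def)
qed

lemma onb_exists:
  fixes W :: "'a::euclidean_space set"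
  assumes "subspace W"
  obtains e where "onb W (dim W) e"
proof -
  obtain B where B: "B \<subseteq> W" "pairwise orthogonal B" "\<And>x. x \<in> B \<Longrightarrow> norm x = 1"
    "independent B" "card B = dim W"
    using orthonormal_basis_subspace[OF assms] by metis
  obtain e where e: "bij_betw e {1..dim W} B"
    using ex_bij_betw_nat_finite_1[OF independent_imp_finite[OF B(4)]] B(5) by metis
  have "onb W (dim W) e"
  proof (rule onbI[OF assms refl])
    show "e i \<in> W" if "i \<in> {1..dim W}" for i
      using e B(1) that by (auto simp: bij_betw_def)
    show "inner (e i) (e j) = (if i = j then 1 else 0)" if "i \<in> {1..dim W}" "j \<in> {1..dim W}" for i j
    proof (cases "i = j")
      case True
      then show ?thesis
        using e B(3) that by (auto simp: bij_betw_def norm_eq_1)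
    next
      case False
      then have "e i \<noteq> e j"
        using e that by (auto simp: bij_betw_def inj_on_def)
      then show ?thesis
        using e B(2) that False by (auto simp: bij_betw_def pairwise_def orthogonal_def)
    qed
  qed
  then show thesis
    by (rule that)
qed

lemma onb_exists_first:
  fixes W :: "'a::euclidean_space set"
  assumes W: "subspace W" and u: "u \<in> W" "norm u = 1"
  obtains e where "onb W (dim W) e" "e 1 = u"
proof -
  define Z where "Z = {y \<in> W. \<forall>x \<in> span {u}. orthogonal x y}"
  have Z_eq: "Z = {y \<in> W. inner u y = 0}"
    unfolding Z_def span_singleton orthogonal_def by auto
  have "span {u} \<subseteq> W"
    using W u by (simp add: span_minimal)
  then have "dim Z + dim (span {u}) = dim W"
    unfolding Z_def using W by (intro dim_subspace_orthogonal_to_vectors) auto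
  moreover have "dim (span {u}) = 1"
    using u by (auto simp: dim_span_eq_card_independent)
  ultimately have dim_Z: "dim W = dim Z + 1"
    by simp
  have "subspace Z"
    using W by (auto simp: Z_eq subspace_def inner_add_right)
  then obtain f where f: "onb Z (dim Z) f"
    by (rule onb_exists)
  define e where "e l = (if l = 1 then u else f (l - 1))" for l
  have f_shift: "l - 1 \<in> {1..dim Z}" if "l \<in> {1..dim W}" "l \<noteq> 1" for l
    using that dim_Z by auto
  have "onb W (dim W) e"
  proof (rule onbI[OF W refl])
    show "e l \<in> W" if "l \<in> {1..dim W}" for l
      using u onb_in[OF f f_shift[OF that]] by (auto simp: e_def Z_eq)
    show "inner (e i) (e j) = (if i = j then 1 else 0)" if "i \<in> {1..dim W}" "j \<in> {1..dim W}" for i j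
      using onb_in[OF f f_shift[OF that(1)]] onb_in[OF f f_shift[OF that(2)]] u(2)
        onb_inner[OF f f_shift[OF that(1)] f_shift[OF that(2)]] that
      by (auto simp: e_def Z_eq norm_eq_1 inner_commute)
  qed
  then show thesis
    using that by (simp add: e_def)
qed

lemma onb_exists_first_direction:
  fixes W :: "'a::euclidean_space set"
  assumes h0: "onb W s h0" and x: "x \<in> W"
  obtains h where "onb W s h" "x \<noteq> 0 \<longrightarrow> h 1 = (1 / norm x) *\<^sub>R x"
    "\<And>l. l \<in> {2..s} \<Longrightarrow> inner x (h l) = 0"
proof (cases "x = 0")
  case True
  then show thesis
    using h0 that by simp
next
  case False
  have "(1 / norm x) *\<^sub>R x \<in> W" "norm ((1 / norm x) *\<^sub>R x) = 1"
    using x False subspace_scale[OF onb_subspace[OF h0]] by auto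
  then obtain h where h: "onb W (dim W) h" "h 1 = (1 / norm x) *\<^sub>R x"
    using onb_exists_first[OF onb_subspace[OF h0]] by blast
  then have "onb W s h"
    using onb_dim[OF h0] by simp
  moreover have "inner x (h l) = 0" if "l \<in> {2..s}" for l
  proof -
    have "inner (h 1) (h l) = 0"
      using onb_inner[OF \<open>onb W s h\<close>, of 1 l] that by auto
    then show ?thesis
      using h(2) False by simp
  qed
  ultimately show thesis
    using that h(2) by blast
qed

lemma subspace_orth_comp: "subspace (orth_comp V)"
  by (auto simp: subspace_def orth_comp_def inner_add_left)

lemma vproj_eqI:
  assumes "v \<in> V" "z - v \<in> orth_comp V"
  shows "vproj V z = v"
  unfolding vproj_def
proof (rule the_equality)
  fix u assume u: "u \<in> V \<and> z - u \<in> orth_comp V"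
  have "inner (v - u) v = 0" "inner (v - u) u = 0"
    using u assms by (auto simp: orth_comp_def inner_diff_left)
  then have "inner (v - u) (v - u) = 0"
    by (simp add: inner_diff_right)
  then show "u = v"
    by simp
qed (use assms in blast)

lemma onb_residual_orthogonal:
  assumes o: "onb V r e"
  shows "z - (\<Sum>i\<in>{1..r}. inner z (e i) *\<^sub>R e i) \<in> orth_comp V"
proof -
  have "inner (\<Sum>i\<in>{1..r}. inner z (e i) *\<^sub>R e i) w = inner z w" if "w \<in> V" for w
  proof -
    have "inner (\<Sum>i\<in>{1..r}. inner z (e i) *\<^sub>R e i) w = (\<Sum>i\<in>{1..r}. inner w (e i) * inner (e i) z)"
      by (simp add: inner_sum_left inner_commute[of _ z] inner_commute[of "e _" w] mult.commute)
    also have "\<dots> = inner w z"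
      by (rule onb_parseval[OF o that, symmetric])
    finally show ?thesis
      by (simp add: inner_commute)
  qed
  then show ?thesis
    by (simp add: orth_comp_def inner_diff_left)
qed

lemma vproj_inner:
  assumes o: "onb V r e" and "y \<in> V"
  shows "inner (vproj V z) y = inner z y"
proof -
  let ?v = "\<Sum>i\<in>{1..r}. inner z (e i) *\<^sub>R e i"
  have "?v \<in> V"
    using onb_subspace[OF o] onb_in[OF o] by (auto intro!: subspace_sum subspace_scale)
  then have "vproj V z = ?v"
    using onb_residual_orthogonal[OF o] by (rule vproj_eqI)
  then show ?thesis
    using onb_residual_orthogonal[OF o, of z] assms(2) by (simp add: orth_comp_def inner_diff_left)
qed

section \<open>Almost contact metric structures\<close>

lemma almost_contact_metric_xi_neq_0:
  assumes "almost_contact_metric \<phi> \<xi> \<eta>"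
  shows "\<xi> \<noteq> 0"
  using assms linear_0[of \<eta>] by (auto simp: almost_contact_metric_def)

lemma almost_contact_metric_cube:
  assumes "almost_contact_metric \<phi> \<xi> \<eta>"
  shows "\<eta> Z *\<^sub>R \<phi> \<xi> = \<eta> (\<phi> Z) *\<^sub>R \<xi>"
proof -
  have lin: "linear \<phi>" and sq: "\<And>Z. \<phi> (\<phi> Z) = - Z + \<eta> Z *\<^sub>R \<xi>"
    using assms by (auto simp: almost_contact_metric_def)
  have "\<phi> (\<phi> (\<phi> Z)) = - \<phi> Z + \<eta> Z *\<^sub>R \<phi> \<xi>"
    by (simp add: sq linear_diff[OF lin] linear_scale[OF lin])
  then show ?thesis
    using sq[of "\<phi> Z"] by simp
qed

lemma almost_contact_metric_phi_xi:
  assumes "almost_contact_metric \<phi> \<xi> \<eta>"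
  shows "\<phi> \<xi> = 0"
proof -
  have lin: "linear \<phi>" and "\<eta> \<xi> = 1" and sq: "\<phi> (\<phi> \<xi>) = - \<xi> + \<eta> \<xi> *\<^sub>R \<xi>"
    using assms by (auto simp: almost_contact_metric_def)
  define a where "a = \<eta> (\<phi> \<xi>)"
  have "\<phi> \<xi> = a *\<^sub>R \<xi>"
    using almost_contact_metric_cube[OF assms, of \<xi>] \<open>\<eta> \<xi> = 1\<close> by (simp add: a_def)
  moreover have "\<phi> (\<phi> \<xi>) = 0"
    using sq \<open>\<eta> \<xi> = 1\<close> by simp
  ultimately have "(a * a) *\<^sub>R \<xi> = 0"
    by (metis linear_scale[OF lin] scaleR_scaleR)
  then show ?thesis
    using \<open>\<phi> \<xi> = a *\<^sub>R \<xi>\<close> almost_contact_metric_xi_neq_0[OF assms] by simp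
qed

lemma almost_contact_metric_eta_phi:
  assumes "almost_contact_metric \<phi> \<xi> \<eta>"
  shows "\<eta> (\<phi> Z) = 0"
  using almost_contact_metric_cube[OF assms, of Z] almost_contact_metric_phi_xi[OF assms]
    almost_contact_metric_xi_neq_0[OF assms]
  by simp

lemma almost_contact_metric_eta_eq_inner:
  assumes "almost_contact_metric \<phi> \<xi> \<eta>"
  shows "\<eta> Z = inner Z \<xi>"
proof -
  have "inner (\<phi> Z) (\<phi> \<xi>) = inner Z \<xi> - \<eta> Z * \<eta> \<xi>" "\<eta> \<xi> = 1"
    using assms by (auto simp: almost_contact_metric_def)
  then show ?thesis
    using almost_contact_metric_phi_xi[OF assms] by simp
qed

lemma almost_contact_metric_skew:
  assumes "almost_contact_metric \<phi> \<xi> \<eta>"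
  shows "inner (\<phi> X) Y = - inner X (\<phi> Y)"
proof -
  have sq: "\<phi> (\<phi> Y) = - Y + \<eta> Y *\<^sub>R \<xi>"
    and met: "\<And>Z1 Z2. inner (\<phi> Z1) (\<phi> Z2) = inner Z1 Z2 - \<eta> Z1 * \<eta> Z2"
    using assms by (auto simp: almost_contact_metric_def)
  have "inner (\<phi> X) \<xi> = 0"
    using almost_contact_metric_eta_phi[OF assms, of X]
    by (simp add: almost_contact_metric_eta_eq_inner[OF assms])
  then show ?thesis
    using met[of X "\<phi> Y"] almost_contact_metric_eta_phi[OF assms, of Y] by (simp add: sq inner_diff_right)
qed

lemma almost_contact_metric_sum_eta_sq_onb:
  assumes acm: "almost_contact_metric \<phi> \<xi> \<eta>" and e: "onb V r e" and "\<xi> \<in> V"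
  shows "(\<Sum>i\<in>{1..r}. (\<eta> (e i))\<^sup>2) = 1"
proof -
  have "(\<Sum>i\<in>{1..r}. (\<eta> (e i))\<^sup>2) = inner \<xi> \<xi>"
    using onb_parseval[OF e \<open>\<xi> \<in> V\<close>, of \<xi>]
    by (simp add: almost_contact_metric_eta_eq_inner[OF acm] power2_eq_square inner_commute)
  also have "\<dots> = 1"
    using acm almost_contact_metric_eta_eq_inner[OF acm, of \<xi>] by (simp add: almost_contact_metric_def)
  finally show ?thesis .
qed

lemma almost_contact_metric_eta_orth_comp:
  assumes acm: "almost_contact_metric \<phi> \<xi> \<eta>" and "\<xi> \<in> orth_comp V" "x \<in> V"
  shows "\<eta> x = 0"
  using assms(2,3)
  by (simp add: almost_contact_metric_eta_eq_inner[OF acm] orth_comp_def inner_commute[of x \<xi>])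

lemma Qnorm2_eq:
  assumes acm: "almost_contact_metric \<phi> \<xi> \<eta>" and e: "onb V r e"
  shows "Qnorm2 V \<phi> r e = (\<Sum>i\<in>{1..r}. \<Sum>j\<in>{1..r}. (inner (e i) (\<phi> (e j)))\<^sup>2)"
  unfolding Qnorm2_def
  using vproj_inner[OF e onb_in[OF e]] almost_contact_metric_skew[OF acm]
  by (intro sum.cong refl) simp

lemma gss_curv_sectional:
  assumes acm: "almost_contact_metric \<phi> \<xi> \<eta>"
  shows "inner (gss_curv c1 c2 c3 \<phi> \<xi> \<eta> X Y Y) X
       = c1 * (inner X X * inner Y Y - (inner X Y)\<^sup>2) + 3 * c2 * (inner X (\<phi> Y))\<^sup>2
         - c3 * ((\<eta> X)\<^sup>2 * inner Y Y + (\<eta> Y)\<^sup>2 * inner X X - 2 * inner X Y * \<eta> X * \<eta> Y)"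
proof -
  have "inner Y (\<phi> Y) = 0"
    using almost_contact_metric_skew[OF acm, of Y Y] by (simp add: inner_commute)
  moreover have "inner (\<phi> Y) X = inner X (\<phi> Y)" "inner Y X = inner X Y" "inner \<xi> X = \<eta> X"
    by (simp_all add: inner_commute almost_contact_metric_eta_eq_inner[OF acm])
  ultimately show ?thesis
    unfolding gss_curv_def
    by (simp add: inner_add_left inner_diff_left power2_eq_square algebra_simps)
qed

section \<open>Chen's algebraic inequality\<close>

lemma sum_norm_sq_deviation:
  fixes x :: "'i \<Rightarrow> 'b::real_inner"
  assumes "finite I" "I \<noteq> {}"
  shows "(\<Sum>k\<in>I. (norm (x k - (\<Sum>l\<in>I. x l) /\<^sub>R real (card I)))\<^sup>2)
       = (\<Sum>k\<in>I. (norm (x k))\<^sup>2) - (norm (\<Sum>k\<in>I. x k))\<^sup>2 / real (card I)"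
proof -
  define N where "N = real (card I)"
  define m where "m = (\<Sum>l\<in>I. x l) /\<^sub>R N"
  have N: "N > 0"
    using assms by (simp add: N_def card_gt_0_iff)
  have "(\<Sum>k\<in>I. (norm (x k - m))\<^sup>2) = (\<Sum>k\<in>I. (norm (x k))\<^sup>2 - 2 * inner m (x k) + inner m m)"
    by (simp add: power2_norm_eq_inner inner_diff_left inner_diff_right inner_commute algebra_simps)
  also have "\<dots> = (\<Sum>k\<in>I. (norm (x k))\<^sup>2) - 2 * inner m (\<Sum>k\<in>I. x k) + N * inner m m"
    by (simp add: sum.distrib sum_subtractf sum_distrib_left inner_sum_right N_def)
  also have "\<dots> = (\<Sum>k\<in>I. (norm (x k))\<^sup>2) - (norm (\<Sum>k\<in>I. x k))\<^sup>2 / N"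
    using N by (simp add: m_def power2_norm_eq_inner field_simps)
  finally show ?thesis
    by (simp add: m_def N_def)
qed

lemma sum_norm_sq_deviation_eq_0_iff:
  fixes x :: "'i \<Rightarrow> 'b::real_inner"
  assumes "finite I" "k0 \<in> I"
  shows "(\<Sum>k\<in>I. (norm (x k - (\<Sum>l\<in>I. x l) /\<^sub>R real (card I)))\<^sup>2) = 0 \<longleftrightarrow> (\<forall>k\<in>I. x k = x k0)"
proof
  let ?m = "(\<Sum>l\<in>I. x l) /\<^sub>R real (card I)"
  assume "(\<Sum>k\<in>I. (norm (x k - ?m))\<^sup>2) = 0"
  then have "\<forall>k\<in>I. x k = ?m"
    using assms(1) by (simp add: sum_nonneg_eq_0_iff)
  then show "\<forall>k\<in>I. x k = x k0"
    using assms(2) by simp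
next
  assume const: "\<forall>k\<in>I. x k = x k0"
  have "card I > 0"
    using assms by (auto simp: card_gt_0_iff)
  moreover have "(\<Sum>l\<in>I. x l) = real (card I) *\<^sub>R x k0"
    using const by (simp add: sum_constant_scaleR)
  ultimately have "(\<Sum>l\<in>I. x l) /\<^sub>R real (card I) = x k0"
    by simp
  then show "(\<Sum>k\<in>I. (norm (x k - (\<Sum>l\<in>I. x l) /\<^sub>R real (card I)))\<^sup>2) = 0"
    using const by simp
qed

lemma sum_atLeastAtMost_split_first_two:
  fixes r :: nat
  assumes "2 \<le> r"
  shows "(\<Sum>i\<in>{1..r}. f i) = f 1 + f 2 + (\<Sum>i\<in>{3..r}. f i)"
proof -
  have "{1..r} = insert 1 (insert 2 {3..r})"
    using assms by auto
  then show ?thesis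
    by (simp add: add.assoc)
qed

lemma sum_square_split_first_two:
  fixes f :: "nat \<Rightarrow> nat \<Rightarrow> real"
  assumes r: "2 \<le> r" and sym: "\<And>i j. i \<in> {1..r} \<Longrightarrow> j \<in> {1..r} \<Longrightarrow> f i j = f j i"
  shows "(\<Sum>i\<in>{1..r}. \<Sum>j\<in>{1..r}. f i j)
       = f 1 1 + f 2 2 + 2 * f 1 2 + 2 * (\<Sum>j\<in>{3..r}. f 1 j + f 2 j) + (\<Sum>i\<in>{3..r}. f i i)
         + (\<Sum>i\<in>{3..r}. \<Sum>j\<in>{3..r} - {i}. f i j)"
proof -
  have row: "f i 1 + f i 2 + (\<Sum>j\<in>{3..r}. f i j) = (f 1 i + f 2 i) + f i i + (\<Sum>j\<in>{3..r} - {i}. f i j)"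
    if "i \<in> {3..r}" for i
    using that r sym by (auto simp: sum.remove)
  have "(\<Sum>i\<in>{3..r}. f i 1 + f i 2 + (\<Sum>j\<in>{3..r}. f i j))
      = (\<Sum>i\<in>{3..r}. (f 1 i + f 2 i) + f i i + (\<Sum>j\<in>{3..r} - {i}. f i j))"
    by (intro sum.cong refl) (rule row)
  moreover have "f 2 1 = f 1 2"
    using r sym by simp
  ultimately show ?thesis
    by (simp only: sum_atLeastAtMost_split_first_two[OF r]) (simp add: sum.distrib)
qed

text \<open>For B i j = T_{V_i}V_j, the difference of the two sides of the inequality.\<close>

definition chen_defect :: "(nat \<Rightarrow> nat \<Rightarrow> 'b::real_inner) \<Rightarrow> nat \<Rightarrow> real" where
  "chen_defect B r =
     (\<Sum>i\<in>{1..r}. \<Sum>j\<in>{1..r}. (norm (B i j))\<^sup>2) / 2 - (norm (\<Sum>i\<in>{1..r}. B i i))\<^sup>2 / (2 * (real r - 1))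
     + inner (B 1 1) (B 2 2) - (norm (B 1 2))\<^sup>2"

definition chen_extremal :: "(nat \<Rightarrow> nat \<Rightarrow> 'b::real_vector) \<Rightarrow> nat \<Rightarrow> bool" where
  "chen_extremal B r \<longleftrightarrow>
     (\<forall>j\<in>{3..r}. B 1 j = 0 \<and> B 2 j = 0) \<and> (\<forall>i\<in>{3..r}. \<forall>j\<in>{3..r}. i \<noteq> j \<longrightarrow> B i j = 0) \<and>
     (\<forall>i\<in>{3..r}. B i i = B 1 1 + B 2 2)"

lemma chen_defect_eq:
  fixes B :: "nat \<Rightarrow> nat \<Rightarrow> 'b::real_inner"
  assumes r: "2 \<le> r" and sym: "\<And>i j. i \<in> {1..r} \<Longrightarrow> j \<in> {1..r} \<Longrightarrow> B i j = B j i"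
  defines "x \<equiv> \<lambda>k. if k = 2 then B 1 1 + B 2 2 else B k k"
  shows "chen_defect B r = (\<Sum>j\<in>{3..r}. (norm (B 1 j))\<^sup>2 + (norm (B 2 j))\<^sup>2)
     + (\<Sum>i\<in>{3..r}. \<Sum>j\<in>{3..r} - {i}. (norm (B i j))\<^sup>2) / 2
     + (\<Sum>k\<in>{2..r}. (norm (x k - (\<Sum>l\<in>{2..r}. x l) /\<^sub>R real (card {2..r})))\<^sup>2) / 2"
proof -
  define R where "R = {3..r}"
  define n where "n i j = (norm (B i j))\<^sup>2" for i j
  define \<sigma> where "\<sigma> = (\<Sum>i\<in>{1..r}. B i i)"
  have rows: "(\<Sum>i\<in>{1..r}. \<Sum>j\<in>{1..r}. n i j)
      = n 1 1 + n 2 2 + 2 * n 1 2 + 2 * (\<Sum>j\<in>R. n 1 j + n 2 j) + (\<Sum>i\<in>R. n i i)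
        + (\<Sum>i\<in>R. \<Sum>j\<in>R - {i}. n i j)"
    unfolding R_def using r sym by (intro sum_square_split_first_two) (auto simp: n_def)
  have "{2..r} = insert 2 R" "2 \<notin> R"
    using r by (auto simp: R_def)
  then have x_sum: "(\<Sum>k\<in>{2..r}. x k) = \<sigma>"
    and x_sq: "(\<Sum>k\<in>{2..r}. (norm (x k))\<^sup>2) = (norm (B 1 1 + B 2 2))\<^sup>2 + (\<Sum>i\<in>R. n i i)"
    using sum_atLeastAtMost_split_first_two[OF r, of "\<lambda>i. B i i"]
    by (auto simp: x_def \<sigma>_def n_def R_def add.assoc)
  have card_tail: "real (card {2..r}) = real r - 1"
    using r by (simp add: of_nat_diff)
  define q where "q = (norm \<sigma>)\<^sup>2 / (real r - 1)"
  have "(norm (B 1 1 + B 2 2))\<^sup>2 = n 1 1 + n 2 2 + 2 * inner (B 1 1) (B 2 2)"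
    by (simp add: n_def power2_norm_eq_inner inner_add_left inner_add_right inner_commute)
  moreover have "(\<Sum>k\<in>{2..r}. (norm (x k - (\<Sum>l\<in>{2..r}. x l) /\<^sub>R real (card {2..r})))\<^sup>2)
      = (\<Sum>k\<in>{2..r}. (norm (x k))\<^sup>2) - q"
    using r by (subst sum_norm_sq_deviation) (auto simp: x_sum card_tail q_def)
  moreover have half_q: "(norm \<sigma>)\<^sup>2 / (2 * (real r - 1)) = q / 2"
    by (simp add: q_def)
  ultimately show ?thesis
    unfolding chen_defect_def rows[unfolded n_def] x_sq \<sigma>_def[symmetric] half_q
    by (simp add: n_def R_def sum.distrib field_simps)
qed

lemma chen_defect_nonneg:
  fixes B :: "nat \<Rightarrow> nat \<Rightarrow> 'b::real_inner"
  assumes "2 \<le> r" "\<And>i j. i \<in> {1..r} \<Longrightarrow> j \<in> {1..r} \<Longrightarrow> B i j = B j i"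
  shows "0 \<le> chen_defect B r"
  using chen_defect_eq[OF assms] by (simp add: sum_nonneg)

lemma chen_defect_eq_0_iff:
  fixes B :: "nat \<Rightarrow> nat \<Rightarrow> 'b::real_inner"
  assumes r: "2 \<le> r" and sym: "\<And>i j. i \<in> {1..r} \<Longrightarrow> j \<in> {1..r} \<Longrightarrow> B i j = B j i"
  shows "chen_defect B r = 0 \<longleftrightarrow> chen_extremal B r"
proof -
  define x where "x = (\<lambda>k. if k = 2 then B 1 1 + B 2 2 else B k k)"
  define P1 where "P1 = (\<Sum>j\<in>{3..r}. (norm (B 1 j))\<^sup>2 + (norm (B 2 j))\<^sup>2)"
  define P2 where "P2 = (\<Sum>i\<in>{3..r}. \<Sum>j\<in>{3..r} - {i}. (norm (B i j))\<^sup>2)"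
  define P3 where "P3 = (\<Sum>k\<in>{2..r}. (norm (x k - (\<Sum>l\<in>{2..r}. x l) /\<^sub>R real (card {2..r})))\<^sup>2)"
  have "0 \<le> P1" "0 \<le> P2" "0 \<le> P3"
    unfolding P1_def P2_def P3_def by (auto intro!: sum_nonneg)
  moreover have "chen_defect B r = P1 + P2 / 2 + P3 / 2"
    using chen_defect_eq[OF assms] by (simp add: P1_def P2_def P3_def x_def)
  ultimately have "chen_defect B r = 0 \<longleftrightarrow> P1 = 0 \<and> P2 = 0 \<and> P3 = 0"
    by linarith
  moreover have "P1 = 0 \<longleftrightarrow> (\<forall>j\<in>{3..r}. B 1 j = 0 \<and> B 2 j = 0)"
    unfolding P1_def by (simp add: sum_nonneg_eq_0_iff add_nonneg_eq_0_iff)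
  moreover have "P2 = 0 \<longleftrightarrow> (\<forall>i\<in>{3..r}. \<forall>j\<in>{3..r}. i \<noteq> j \<longrightarrow> B i j = 0)"
    unfolding P2_def by (auto simp: sum_nonneg_eq_0_iff sum_nonneg)
  moreover have "P3 = 0 \<longleftrightarrow> (\<forall>i\<in>{3..r}. B i i = B 1 1 + B 2 2)"
  proof -
    have "P3 = 0 \<longleftrightarrow> (\<forall>k\<in>{2..r}. x k = x 2)"
      unfolding P3_def using r by (intro sum_norm_sq_deviation_eq_0_iff) auto
    also have "\<dots> \<longleftrightarrow> (\<forall>i\<in>{3..r}. B i i = B 1 1 + B 2 2)"
      by (auto simp: x_def)
    finally show ?thesis .
  qed
  ultimately show ?thesis
    unfolding chen_extremal_def by blast
qed

section \<open>Independence of the adapted orthonormal basis\<close>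

lemma bilinear_sum_scaleR_left:
  "bilinear B \<Longrightarrow> B (\<Sum>k\<in>S. a k *\<^sub>R u k) y = (\<Sum>k\<in>S. a k *\<^sub>R B (u k) y)"
  unfolding bilinear_def by (simp add: linear_sum[of "\<lambda>x. B x y"] linear_scale[of "\<lambda>x. B x y"])

lemma bilinear_sum_scaleR_right:
  "bilinear B \<Longrightarrow> B x (\<Sum>k\<in>S. a k *\<^sub>R u k) = (\<Sum>k\<in>S. a k *\<^sub>R B x (u k))"
  unfolding bilinear_def by (simp add: linear_sum[of "B x"] linear_scale[of "B x"])

lemma bilinear_inner_linear:
  assumes "linear f" "linear g"
  shows "bilinear (\<lambda>u v. inner (f u) (g v))"
  unfolding bilinear_def
  by (auto intro!: linearI simp: linear_add[OF assms(1)] linear_add[OF assms(2)]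
      linear_scale[OF assms(1)] linear_scale[OF assms(2)] inner_add_left inner_add_right)

lemma bilinear_trace_onb_invariant:
  fixes B :: "'a::real_inner \<Rightarrow> 'a \<Rightarrow> 'b::real_vector"
  assumes bl: "bilinear B" and e: "onb V r e" and W: "onb V r W"
  shows "(\<Sum>i\<in>{1..r}. B (W i) (W i)) = (\<Sum>i\<in>{1..r}. B (e i) (e i))"
proof -
  have "(\<Sum>i\<in>{1..r}. B (W i) (W i)) = (\<Sum>i\<in>{1..r}. B (W i) (\<Sum>k\<in>{1..r}. inner (W i) (e k) *\<^sub>R e k))"
    using onb_expand[OF e onb_in[OF W]] by (intro sum.cong) auto
  also have "\<dots> = (\<Sum>k\<in>{1..r}. \<Sum>i\<in>{1..r}. inner (e k) (W i) *\<^sub>R B (W i) (e k))"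
    by (simp add: bilinear_sum_scaleR_right[OF bl] inner_commute) (rule sum.swap)
  also have "\<dots> = (\<Sum>k\<in>{1..r}. B (\<Sum>i\<in>{1..r}. inner (e k) (W i) *\<^sub>R W i) (e k))"
    by (simp add: bilinear_sum_scaleR_left[OF bl])
  also have "\<dots> = (\<Sum>k\<in>{1..r}. B (e k) (e k))"
    using onb_expand[OF W onb_in[OF e]] by (intro sum.cong) auto
  finally show ?thesis .
qed

lemma bilinear_sum_norm_sq_onb_invariant:
  fixes T :: "'a::real_inner \<Rightarrow> 'a \<Rightarrow> 'b::real_inner"
  assumes bl: "bilinear T" and e: "onb V r e" and W: "onb V r W"
  shows "(\<Sum>i\<in>{1..r}. \<Sum>j\<in>{1..r}. (norm (T (W i) (W j)))\<^sup>2)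
       = (\<Sum>i\<in>{1..r}. \<Sum>j\<in>{1..r}. (norm (T (e i) (e j)))\<^sup>2)"
proof -
  have lin: "linear (\<lambda>x. T x y)" "linear (T x)" for x y
    using bl by (simp_all add: bilinear_def)
  have "(\<Sum>i\<in>{1..r}. \<Sum>j\<in>{1..r}. inner (T (W i) (W j)) (T (W i) (W j)))
      = (\<Sum>i\<in>{1..r}. \<Sum>j\<in>{1..r}. inner (T (W i) (e j)) (T (W i) (e j)))"
    by (intro sum.cong refl bilinear_trace_onb_invariant[OF bilinear_inner_linear[OF lin(2) lin(2)] e W])
  also have "\<dots> = (\<Sum>j\<in>{1..r}. \<Sum>i\<in>{1..r}. inner (T (W i) (e j)) (T (W i) (e j)))"
    by (rule sum.swap)
  also have "\<dots> = (\<Sum>j\<in>{1..r}. \<Sum>i\<in>{1..r}. inner (T (e i) (e j)) (T (e i) (e j)))"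
    by (intro sum.cong refl bilinear_trace_onb_invariant[OF bilinear_inner_linear[OF lin(1) lin(1)] e W])
  also have "\<dots> = (\<Sum>i\<in>{1..r}. \<Sum>j\<in>{1..r}. inner (T (e i) (e j)) (T (e i) (e j)))"
    by (rule sum.swap)
  finally show ?thesis
    by (simp add: power2_norm_eq_inner)
qed

lemma span_pair_coordinates:
  assumes "x \<in> span {u, w}"
  obtains a b where "x = a *\<^sub>R u + b *\<^sub>R w"
  using assms unfolding span_breakdown_eq span_singleton
  by (metis (no_types, lifting) add.commute diff_add_cancel rangeE)

lemma bilinear_plane_term_invariant:
  fixes T :: "'a::real_inner \<Rightarrow> 'a \<Rightarrow> 'b::real_inner"
  assumes bl: "bilinear T" and sym: "T u2 u1 = T u1 u2"
    and u: "inner u1 u1 = 1" "inner u2 u2 = 1" "inner u1 u2 = 0"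
    and v: "inner v1 v1 = 1" "inner v2 v2 = 1" "inner v1 v2 = 0"
    and v_span: "v1 \<in> span {u1, u2}" "v2 \<in> span {u1, u2}"
  shows "inner (T v1 v1) (T v2 v2) - (norm (T v1 v2))\<^sup>2
       = inner (T u1 u1) (T u2 u2) - (norm (T u1 u2))\<^sup>2"
proof -
  obtain a b where v1: "v1 = a *\<^sub>R u1 + b *\<^sub>R u2"
    using v_span(1) by (rule span_pair_coordinates)
  obtain c d where v2: "v2 = c *\<^sub>R u1 + d *\<^sub>R u2"
    using v_span(2) by (rule span_pair_coordinates)
  have "a * a + b * b = 1" "c * c + d * d = 1" "a * c + b * d = 0"
    using u v unfolding v1 v2 by (simp_all add: inner_add_left inner_add_right inner_commute algebra_simps)
  moreover have "(a * d - b * c)\<^sup>2 = (a * a + b * b) * (c * c + d * d) - (a * c + b * d)\<^sup>2"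
    by (simp add: power2_eq_square algebra_simps)
  ultimately have det: "(a * d - b * c)\<^sup>2 = 1"
    by simp
  define A where "A = T u1 u1"
  define C where "C = T u1 u2"
  define D where "D = T u2 u2"
  have T_lin: "T (p *\<^sub>R u1 + q *\<^sub>R u2) (p' *\<^sub>R u1 + q' *\<^sub>R u2)
      = (p * p') *\<^sub>R A + (p * q' + q * p') *\<^sub>R C + (q * q') *\<^sub>R D" for p q p' q'
    using sym by (simp add: bilinear_ladd[OF bl] bilinear_radd[OF bl] bilinear_lmul[OF bl]
        bilinear_rmul[OF bl] A_def C_def D_def algebra_simps)
  have "inner (T v1 v1) (T v2 v2) - (norm (T v1 v2))\<^sup>2 = (a * d - b * c)\<^sup>2 * (inner A D - (norm C)\<^sup>2)"
    unfolding v1 v2 T_lin power2_norm_eq_inner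
    by (simp add: inner_add_left inner_add_right inner_commute power2_eq_square algebra_simps)
  then show ?thesis
    by (simp add: det A_def C_def D_def)
qed

lemma chen_defect_onb_invariant:
  fixes T :: "'a::real_inner \<Rightarrow> 'a \<Rightarrow> 'b::real_inner"
  assumes e: "onb V r e" and W: "onb V r W" and r: "2 \<le> r"
    and plane: "span {W 1, W 2} = span {e 1, e 2}" and bl: "bilinear T"
    and sym: "\<And>x y. x \<in> V \<Longrightarrow> y \<in> V \<Longrightarrow> T x y = T y x"
  shows "chen_defect (\<lambda>i j. T (W i) (W j)) r = chen_defect (\<lambda>i j. T (e i) (e j)) r"
proof -
  have in_r: "1 \<in> {1..r}" "2 \<in> {1..r}"
    using r by auto
  have "W 1 \<in> span {e 1, e 2}" "W 2 \<in> span {e 1, e 2}"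
    unfolding plane[symmetric] by (simp_all add: span_base)
  then have "inner (T (W 1) (W 1)) (T (W 2) (W 2)) - (norm (T (W 1) (W 2)))\<^sup>2
      = inner (T (e 1) (e 1)) (T (e 2) (e 2)) - (norm (T (e 1) (e 2)))\<^sup>2"
    using in_r onb_inner[OF e] onb_inner[OF W] sym[OF onb_in[OF e] onb_in[OF e]]
    by (intro bilinear_plane_term_invariant[OF bl]) auto
  then show ?thesis
    unfolding chen_defect_def bilinear_trace_onb_invariant[OF bl e W]
      bilinear_sum_norm_sq_onb_invariant[OF bl e W]
    by simp
qed

section \<open>Condition (E)\<close>

lemma chen_extremal_if_coordinates:
  fixes B :: "nat \<Rightarrow> nat \<Rightarrow> 'a::real_inner"
  assumes h: "onb W s h" and B_in: "\<And>i j. i \<in> {1..r} \<Longrightarrow> j \<in> {1..r} \<Longrightarrow> B i j \<in> W"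
    and C1: "\<forall>l\<in>{1..s}. \<forall>j\<in>{3..r}. inner (B 1 j) (h l) = 0 \<and> inner (B 2 j) (h l) = 0"
    and C2: "1 \<le> s \<longrightarrow> (\<forall>i\<in>{3..r}. \<forall>j\<in>{3..r}. i \<noteq> j \<longrightarrow> inner (B i j) (h 1) = 0)"
    and C3: "\<forall>l\<in>{2..s}. \<forall>i\<in>{3..r}. \<forall>j\<in>{3..r}. inner (B i j) (h l) = 0"
    and C4: "\<forall>l\<in>{2..s}. inner (B 1 1) (h l) + inner (B 2 2) (h l) = 0"
    and C5: "1 \<le> s \<longrightarrow> (\<forall>i\<in>{3..r}. inner (B 1 1) (h 1) + inner (B 2 2) (h 1) = inner (B i i) (h 1))"
  shows "chen_extremal B r"
  unfolding chen_extremal_def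
proof (intro conjI ballI impI)
  have l_cases: "l = 1 \<or> l \<in> {2..s}" if "l \<in> {1..s}" for l
    using that by auto
  fix i j assume ij: "i \<in> {3..r}" "j \<in> {3..r}"
  show "B 1 j = 0" "B 2 j = 0"
    using C1 ij B_in by (auto intro!: onb_eq_0[OF h])
  show "B i j = 0" if "i \<noteq> j"
  proof (rule onb_eq_0[OF h])
    show "B i j \<in> W"
      using ij B_in by auto
    show "inner (B i j) (h l) = 0" if "l \<in> {1..s}" for l
      using l_cases[OF that] C2 C3 ij \<open>i \<noteq> j\<close> that by auto
  qed
  have "B i i - (B 1 1 + B 2 2) \<in> W"
    using ij B_in onb_subspace[OF h] by (auto intro!: subspace_diff subspace_add)
  moreover have "inner (B i i - (B 1 1 + B 2 2)) (h l) = 0" if "l \<in> {1..s}" for l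
    using l_cases[OF that] C3 C4 C5 ij that by (auto simp: inner_diff_left inner_add_left)
  ultimately have "B i i - (B 1 1 + B 2 2) = 0"
    by (rule onb_eq_0[OF h])
  then show "B i i = B 1 1 + B 2 2"
    by simp
qed

lemma chen_extremal_if_condE:
  assumes Tvert: "\<And>U W. U \<in> V \<Longrightarrow> W \<in> V \<Longrightarrow> T U W \<in> orth_comp V"
    and "condE V T Hm r s e"
  obtains W where "onb V r W" "span {W 1, W 2} = span {e 1, e 2}"
    "chen_extremal (\<lambda>i j. T (W i) (W j)) r"
proof -
  have T_in: "T (W i) (W j) \<in> orth_comp V" if "onb V r W" "i \<in> {1..r}" "j \<in> {1..r}" for W i j
    using Tvert onb_in that by blast
  show thesis
    using \<open>condE V T Hm r s e\<close> that T_in unfolding condE_def Let_def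
    by (blast intro: chen_extremal_if_coordinates)
qed

lemma meanH_chen_extremal:
  assumes r: "2 \<le> r" and ext: "chen_extremal (\<lambda>i j. T (e i) (e j)) r"
  shows "meanH T r e = ((real r - 1) / real r) *\<^sub>R (T (e 1) (e 1) + T (e 2) (e 2))"
proof -
  define c where "c = T (e 1) (e 1) + T (e 2) (e 2)"
  have "(\<Sum>i\<in>{1..r}. T (e i) (e i)) = c + (\<Sum>i\<in>{3..r}. c)"
    using sum_atLeastAtMost_split_first_two[OF r, of "\<lambda>i. T (e i) (e i)"] ext
    by (simp add: c_def chen_extremal_def)
  also have "\<dots> = (1 + real (card {3..r})) *\<^sub>R c"
    by (simp add: sum_constant_scaleR scaleR_left_distrib)
  also have "1 + real (card {3..r}) = real r - 1"
    using r by (simp add: of_nat_diff)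
  finally show ?thesis
    by (simp add: meanH_def c_def)
qed

lemma condE_if_chen_extremal:
  fixes T :: "'a::euclidean_space \<Rightarrow> 'a \<Rightarrow> 'a"
  assumes e: "onb V r e" and h0: "onb (orth_comp V) s h0" and r: "2 \<le> r"
    and Tvert: "\<And>U W. U \<in> V \<Longrightarrow> W \<in> V \<Longrightarrow> T U W \<in> orth_comp V"
    and ext: "chen_extremal (\<lambda>i j. T (e i) (e j)) r"
  shows "condE V T (meanH T r e) r s e"
proof -
  define Hm where "Hm = meanH T r e"
  have "T (e 1) (e 1) + T (e 2) (e 2) \<in> orth_comp V"
    using r Tvert onb_in[OF e] subspace_orth_comp by (auto intro!: subspace_add)
  then have "Hm \<in> orth_comp V"
    unfolding Hm_def meanH_chen_extremal[OF r ext] by (rule subspace_scale[OF subspace_orth_comp])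
  then obtain h where h: "onb (orth_comp V) s h" "Hm \<noteq> 0 \<longrightarrow> h 1 = (1 / norm Hm) *\<^sub>R Hm"
    and Hm_perp: "\<And>l. l \<in> {2..s} \<Longrightarrow> inner Hm (h l) = 0"
    using onb_exists_first_direction[OF h0] by blast
  have "(real r - 1) / real r \<noteq> 0"
    using r by auto
  then have perp: "inner (T (e 1) (e 1)) (h l) + inner (T (e 2) (e 2)) (h l) = 0" if "l \<in> {2..s}" for l
    using Hm_perp[OF that] by (simp add: Hm_def meanH_chen_extremal[OF r ext] inner_add_left)
  \<comment> \<open>Condition (E) holds with e itself as the adapted basis and the basis h just chosen.\<close>
  show ?thesis
    unfolding condE_def Let_def Hm_def[symmetric]
  proof (intro exI conjI ballI impI)
    fix l i j assume "l \<in> {2..s}" "i \<in> {3..r}" "j \<in> {3..r}"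
    then show "inner (T (e i) (e j)) (h l) = 0"
      using ext perp by (cases "i = j") (auto simp: chen_extremal_def inner_add_left)
  qed (use e h ext perp in \<open>auto simp: chen_extremal_def inner_add_left\<close>)
qed

lemma condE_iff_chen_defect_eq_0:
  fixes T :: "'a::euclidean_space \<Rightarrow> 'a \<Rightarrow> 'a"
  assumes e: "onb V r e" and h0: "onb (orth_comp V) s h0" and r: "2 \<le> r" and bl: "bilinear T"
    and Tvert: "\<And>U W. U \<in> V \<Longrightarrow> W \<in> V \<Longrightarrow> T U W \<in> orth_comp V \<and> T U W = T W U"
  shows "condE V T (meanH T r e) r s e \<longleftrightarrow> chen_defect (\<lambda>i j. T (e i) (e j)) r = 0"
proof
  assume "condE V T (meanH T r e) r s e"
  then obtain W where W: "onb V r W" "span {W 1, W 2} = span {e 1, e 2}"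
    and ext: "chen_extremal (\<lambda>i j. T (W i) (W j)) r"
    using chen_extremal_if_condE[of V T] Tvert by blast
  have "chen_defect (\<lambda>i j. T (W i) (W j)) r = 0"
    using ext r Tvert onb_in[OF W(1)] by (subst chen_defect_eq_0_iff) auto
  then show "chen_defect (\<lambda>i j. T (e i) (e j)) r = 0"
    using chen_defect_onb_invariant[OF e W(1) r W(2) bl] Tvert by simp
next
  assume "chen_defect (\<lambda>i j. T (e i) (e j)) r = 0"
  then have "chen_extremal (\<lambda>i j. T (e i) (e j)) r"
    using r Tvert onb_in[OF e] by (subst (asm) chen_defect_eq_0_iff) auto
  then show "condE V T (meanH T r e) r s e"
    using condE_if_chen_extremal[OF e h0 r] Tvert by blast
qed

lemma tauV_minus_sectional_Gauss:
  fixes T :: "'a::real_inner \<Rightarrow> 'a \<Rightarrow> 'a"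
  assumes e: "onb V r e" and r: "2 \<le> r"
    and sym: "\<And>U W. U \<in> V \<Longrightarrow> W \<in> V \<Longrightarrow> T U W = T W U"
    and Gauss: "\<And>F1 F2 F3 F4. F1 \<in> V \<Longrightarrow> F2 \<in> V \<Longrightarrow> F3 \<in> V \<Longrightarrow> F4 \<in> V \<Longrightarrow>
        R0 F1 F2 F3 F4 = Rk F1 F2 F3 F4 + inner (T F1 F4) (T F2 F3) - inner (T F2 F4) (T F1 F3)"
  shows "tauV Rk r e - Rk (e 1) (e 2) (e 2) (e 1)
       = tauV R0 r e - R0 (e 1) (e 2) (e 2) (e 1)
         - (real r)\<^sup>2 * (real r - 2) / (2 * (real r - 1)) * (norm (meanH T r e))\<^sup>2
         + chen_defect (\<lambda>i j. T (e i) (e j)) r"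
proof -
  define B where "B i j = T (e i) (e j)" for i j
  define \<sigma> where "\<sigma> = (\<Sum>i\<in>{1..r}. B i i)"
  have Rk_eq: "Rk (e i) (e j) (e j) (e i) = R0 (e i) (e j) (e j) (e i) - inner (B i i) (B j j) + (norm (B i j))\<^sup>2"
    if "i \<in> {1..r}" "j \<in> {1..r}" for i j
    using Gauss[OF onb_in[OF e] onb_in[OF e] onb_in[OF e] onb_in[OF e], OF that(1) that(2) that(2) that(1)]
      sym[OF onb_in[OF e that(2)] onb_in[OF e that(1)]]
    by (simp add: B_def power2_norm_eq_inner)
  have "(\<Sum>i\<in>{1..r}. \<Sum>j\<in>{1..r}. inner (B i i) (B j j)) = (norm \<sigma>)\<^sup>2"
    by (simp only: \<sigma>_def power2_norm_eq_inner inner_sum_left) (simp add: inner_sum_right)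
  then have tau: "tauV Rk r e = tauV R0 r e - (norm \<sigma>)\<^sup>2 / 2 + (\<Sum>i\<in>{1..r}. \<Sum>j\<in>{1..r}. (norm (B i j))\<^sup>2) / 2"
    unfolding tauV_def using Rk_eq by (simp add: sum.distrib sum_subtractf)
  have H: "(norm (meanH T r e))\<^sup>2 = (norm \<sigma>)\<^sup>2 / (real r)\<^sup>2"
    by (simp add: meanH_def \<sigma>_def B_def power_divide)
  have defect: "chen_defect (\<lambda>i j. T (e i) (e j)) r = (\<Sum>i\<in>{1..r}. \<Sum>j\<in>{1..r}. (norm (B i j))\<^sup>2) / 2
      - (norm \<sigma>)\<^sup>2 / (2 * (real r - 1)) + inner (B 1 1) (B 2 2) - (norm (B 1 2))\<^sup>2"
    by (simp add: chen_defect_def B_def \<sigma>_def)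
  have half: "(real r)\<^sup>2 * (real r - 2) / (2 * (real r - 1)) * ((norm \<sigma>)\<^sup>2 / (real r)\<^sup>2)
      + (norm \<sigma>)\<^sup>2 / (2 * (real r - 1)) = (norm \<sigma>)\<^sup>2 / 2"
  proof -
    have "real r \<noteq> 0" "real r - 1 \<noteq> 0"
      using r by auto
    then show ?thesis
      by (simp add: divide_simps) (simp add: algebra_simps power2_eq_square)
  qed
  have "1 \<in> {1..r}" "2 \<in> {1..r}"
    using r by auto
  then show ?thesis
    unfolding H defect using tau Rk_eq[OF \<open>1 \<in> {1..r}\<close> \<open>2 \<in> {1..r}\<close>] half by linarith
qed

lemma gss_curv_tauV_minus_sectional:
  fixes c1 c2 c3 :: real
  assumes acm: "almost_contact_metric \<phi> \<xi> \<eta>" and e: "onb V r e" and r: "2 \<le> r"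
  defines "R0 \<equiv> \<lambda>F1 F2 F3 F4. inner (gss_curv c1 c2 c3 \<phi> \<xi> \<eta> F1 F2 F3) F4"
  shows "tauV R0 r e - R0 (e 1) (e 2) (e 2) (e 1)
       = c1 / 2 * ((real r)\<^sup>2 - real r - 2)
         + 3 / 2 * c2 * ((\<Sum>i\<in>{1..r}. \<Sum>j\<in>{1..r}. (inner (e i) (\<phi> (e j)))\<^sup>2) - 2 * (inner (e 1) (\<phi> (e 2)))\<^sup>2)
         - c3 * ((real r - 1) * (\<Sum>i\<in>{1..r}. (\<eta> (e i))\<^sup>2) - ((\<eta> (e 1))\<^sup>2 + (\<eta> (e 2))\<^sup>2))"
proof -
  define q where "q i j = (inner (e i) (\<phi> (e j)))\<^sup>2" for i j
  define S where "S = (\<Sum>i\<in>{1..r}. (\<eta> (e i))\<^sup>2)"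
  have q_diag: "q i i = 0" for i
    using almost_contact_metric_skew[OF acm, of "e i" "e i"] by (simp add: q_def inner_commute)
  have R0_eq: "R0 (e i) (e j) (e j) (e i) = c1 + 3 * c2 * q i j - c3 * ((\<eta> (e i))\<^sup>2 + (\<eta> (e j))\<^sup>2)
      - (if i = j then c1 - 2 * c3 * (\<eta> (e i))\<^sup>2 else 0)" if "i \<in> {1..r}" "j \<in> {1..r}" for i j
    using onb_inner[OF e that(1) that(2)] onb_inner[OF e that(1) that(1)] onb_inner[OF e that(2) that(2)]
      q_diag[of i]
    by (cases "i = j") (simp_all add: R0_def gss_curv_sectional[OF acm] q_def power2_eq_square algebra_simps)
  have row: "(\<Sum>j\<in>{1..r}. R0 (e i) (e j) (e j) (e i)) = real r * c1 + 3 * c2 * (\<Sum>j\<in>{1..r}. q i j)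
      - c3 * (real r * (\<eta> (e i))\<^sup>2 + S) - (c1 - 2 * c3 * (\<eta> (e i))\<^sup>2)" if "i \<in> {1..r}" for i
    using that by (simp add: R0_eq sum.distrib sum_subtractf sum_distrib_left[symmetric] S_def)
  have "(\<Sum>i\<in>{1..r}. \<Sum>j\<in>{1..r}. R0 (e i) (e j) (e j) (e i))
      = (\<Sum>i\<in>{1..r}. real r * c1 + 3 * c2 * (\<Sum>j\<in>{1..r}. q i j)
          - c3 * (real r * (\<eta> (e i))\<^sup>2 + S) - (c1 - 2 * c3 * (\<eta> (e i))\<^sup>2))"
    by (intro sum.cong refl) (rule row)
  also have "\<dots> = c1 * ((real r)\<^sup>2 - real r) + 3 * c2 * (\<Sum>i\<in>{1..r}. \<Sum>j\<in>{1..r}. q i j)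
      - 2 * c3 * (real r - 1) * S"
    by (simp add: sum.distrib sum_subtractf sum_distrib_left[symmetric] S_def power2_eq_square algebra_simps)
  finally have "tauV R0 r e = c1 / 2 * ((real r)\<^sup>2 - real r) + 3 / 2 * c2 * (\<Sum>i\<in>{1..r}. \<Sum>j\<in>{1..r}. q i j)
      - c3 * (real r - 1) * S"
    unfolding tauV_def by simp
  moreover have "R0 (e 1) (e 2) (e 2) (e 1) = c1 + 3 * c2 * q 1 2 - c3 * ((\<eta> (e 1))\<^sup>2 + (\<eta> (e 2))\<^sup>2)"
    using R0_eq[of 1 2] r by simp
  ultimately show ?thesis
    by (simp add: q_def S_def algebra_simps)
qed

lemma gss_tauV_minus_sectional:
  fixes T :: "'a::real_inner \<Rightarrow> 'a \<Rightarrow> 'a"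
  assumes acm: "almost_contact_metric \<phi> \<xi> \<eta>" and e: "onb V r e" and r: "2 \<le> r"
    and sym: "\<And>U W. U \<in> V \<Longrightarrow> W \<in> V \<Longrightarrow> T U W = T W U"
    and Gauss: "\<And>F1 F2 F3 F4. F1 \<in> V \<Longrightarrow> F2 \<in> V \<Longrightarrow> F3 \<in> V \<Longrightarrow> F4 \<in> V \<Longrightarrow>
        inner (gss_curv c1 c2 c3 \<phi> \<xi> \<eta> F1 F2 F3) F4
          = Rk F1 F2 F3 F4 + inner (T F1 F4) (T F2 F3) - inner (T F2 F4) (T F1 F3)"
  shows "tauV Rk r e - Rk (e 1) (e 2) (e 2) (e 1)
       = - (real r ^ 2 * (real r - 2)) / (2 * (real r - 1)) * (norm (meanH T r e))\<^sup>2
         + c1 / 2 * (real r ^ 2 - real r - 2)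
         - c3 * ((real r - 1) * (\<Sum>i\<in>{1..r}. (\<eta> (e i))\<^sup>2) - ((\<eta> (e 1))\<^sup>2 + (\<eta> (e 2))\<^sup>2))
         + 3 / 2 * c2 * (Qnorm2 V \<phi> r e - 2 * (inner (e 1) (vproj V (\<phi> (e 2))))\<^sup>2)
         + chen_defect (\<lambda>i j. T (e i) (e j)) r"
proof -
  let ?R0 = "\<lambda>F1 F2 F3 F4. inner (gss_curv c1 c2 c3 \<phi> \<xi> \<eta> F1 F2 F3) F4"
  have Chen: "tauV Rk r e - Rk (e 1) (e 2) (e 2) (e 1)
      = tauV ?R0 r e - ?R0 (e 1) (e 2) (e 2) (e 1)
        - (real r)\<^sup>2 * (real r - 2) / (2 * (real r - 1)) * (norm (meanH T r e))\<^sup>2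
        + chen_defect (\<lambda>i j. T (e i) (e j)) r"
    using sym Gauss by (intro tauV_minus_sectional_Gauss[OF e r]) auto
  have "1 \<in> {1..r}" "2 \<in> {1..r}"
    using r by auto
  then have "inner (e 1) (vproj V (\<phi> (e 2))) = inner (e 1) (\<phi> (e 2))"
    using vproj_inner[OF e onb_in[OF e]] by (simp add: inner_commute)
  then show ?thesis
    unfolding Chen gss_curv_tauV_minus_sectional[OF acm e r] Qnorm2_eq[OF acm e]
    by simp
qed

theorem mainTheorem5:
  fixes \<phi> :: "'a::euclidean_space \<Rightarrow> 'a" and \<xi> :: 'a and \<eta> :: "'a \<Rightarrow> real"
    and c1 c2 c3 :: real
    and V :: "'a set"
    and T :: "'a \<Rightarrow> 'a \<Rightarrow> 'a"
    and Rk :: "'a \<Rightarrow> 'a \<Rightarrow> 'a \<Rightarrow> 'a \<Rightarrow> real"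
    and n m k r s :: nat
    and e h :: "nat \<Rightarrow> 'a"
  assumes dimn: "DIM('a) = n" "n = 2 * k + 1"
    and acm: "almost_contact_metric \<phi> \<xi> \<eta>"
    and Vsub: "subspace V" "dim V = r" "r = n - m" "s = m" "r > 2"
    and Tbil: "bilinear T"
    and Tvert: "\<And>U W. U \<in> V \<Longrightarrow> W \<in> V \<Longrightarrow> T U W \<in> orth_comp V \<and> T U W = T W U"
    and Gauss: "\<And>F1 F2 F3 F4. F1 \<in> V \<Longrightarrow> F2 \<in> V \<Longrightarrow> F3 \<in> V \<Longrightarrow> F4 \<in> V \<Longrightarrow>
        inner (gss_curv c1 c2 c3 \<phi> \<xi> \<eta> F1 F2 F3) F4
          = Rk F1 F2 F3 F4 + inner (T F1 F4) (T F2 F3) - inner (T F2 F4) (T F1 F3)"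
    and ebasis: "onb V r e"
    and hbasis: "onb (orth_comp V) s h"
  shows "(\<xi> \<in> V \<longrightarrow>
            (let lhs = tauV Rk r e - Rk (e 1) (e 2) (e 2) (e 1);
                 rhs = - (real r ^ 2 * (real r - 2)) / (2 * (real r - 1)) * (norm (meanH T r e))\<^sup>2
                       + c1 / 2 * (real r ^ 2 - real r - 2)
                       - c3 * ((real r - 1) - ((\<eta> (e 1))\<^sup>2 + (\<eta> (e 2))\<^sup>2))
                       + 3 / 2 * c2 * (Qnorm2 V \<phi> r e - 2 * (inner (e 1) (vproj V (\<phi> (e 2))))\<^sup>2)
             in lhs \<ge> rhs \<and> (lhs = rhs \<longleftrightarrow> condE V T (meanH T r e) r s e)))
       \<and> (\<xi> \<in> orth_comp V \<longrightarrow>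
            (let lhs = tauV Rk r e - Rk (e 1) (e 2) (e 2) (e 1);
                 rhs = - (real r ^ 2 * (real r - 2)) / (2 * (real r - 1)) * (norm (meanH T r e))\<^sup>2
                       + c1 / 2 * (real r ^ 2 - real r - 2)
                       + 3 / 2 * c2 * (Qnorm2 V \<phi> r e - 2 * (inner (e 1) (vproj V (\<phi> (e 2))))\<^sup>2)
             in lhs \<ge> rhs \<and> (lhs = rhs \<longleftrightarrow> condE V T (meanH T r e) r s e)))"
proof -
  have r: "2 \<le> r"
    using Vsub(5) by simp
  have "\<And>U W. U \<in> V \<Longrightarrow> W \<in> V \<Longrightarrow> T U W = T W U"
    using Tvert by blast
  note gap = gss_tauV_minus_sectional[OF acm ebasis r this Gauss]
  have "0 \<le> chen_defect (\<lambda>i j. T (e i) (e j)) r"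
    using Tvert onb_in[OF ebasis] by (intro chen_defect_nonneg[OF r]) auto
  moreover note condE_iff_chen_defect_eq_0[OF ebasis hbasis r Tbil Tvert]
  moreover have "\<eta> (e 1) = 0" "\<eta> (e 2) = 0" "(\<Sum>i\<in>{1..r}. (\<eta> (e i))\<^sup>2) = 0"
    if "\<xi> \<in> orth_comp V"
    using r almost_contact_metric_eta_orth_comp[OF acm that onb_in[OF ebasis]] by auto
  ultimately show ?thesis
    unfolding Let_def using gap almost_contact_metric_sum_eta_sq_onb[OF acm ebasis] by auto
qed

end
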